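(* Let $K$ be a field of characteristic $0$, let $E$ be the infinite-dimensional unitary Grassmann algebra over $K$ with even part $E_0$, let $A=\begin{pmatrix} E_0 & E\\ 0 & E\end{pmatrix}$, and let $F_n(A)=K\langle x_1,\dots,x_n\rangle/(K\langle x_1,\dots,x_n\rangle\cap T(A))$. If $n\geq 2$ and $m\geq 2$, then the polynomial \[f_m^{(1)}=[x_2,x_1,\dots,x_1]\] (a left-normed commutator of length $m$ with $x_2$ followed by $m-1$ copies of $x_1$) is not a polynomial identity of $F_n(A)$.
   Context: All algebras are associative and unitary over $K$; $T(A)$ is the ideal of polynomial identities of $A$. $E$ is generated by anticommuting $e_1,e_2,\dots$ and $E_0$ is the span of basis products of even length. Commutators: $[a,b]=ab-ba$, $[a_1,\dots,a_k]=[[a_1,\dots,a_{k-1}],a_k]$. *)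

theory Defs
  imports Main
begin

text \<open>An element of E is a K-linear combination of basis monomials e_S = e_{i1} ... e_{ik}
  (i1 < ... < ik, S = {i1,...,ik} finite); it is represented by its coefficient function.\<close>

type_synonym 'k grass = "nat set \<Rightarrow> 'k"

definition grass_carrier :: "'k::field grass set" where
  "grass_carrier = {a. finite {S. a S \<noteq> 0} \<and> (\<forall>S. a S \<noteq> 0 \<longrightarrow> finite S)}"

definition grass_even :: "'k::field grass set" where
  "grass_even = {a \<in> grass_carrier. \<forall>S. a S \<noteq> 0 \<longrightarrow> even (card S)}"

text \<open>Number of inversions when concatenating e_T and e_U: e_T e_U = (-1)^inv e_(T \<union> U).\<close>
definition grass_inv :: "nat set \<Rightarrow> nat set \<Rightarrow> nat" where
  "grass_inv T U = card {(i, j). i \<in> T \<and> j \<in> U \<and> j < i}"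

definition grass_zero :: "'k::field grass" where
  "grass_zero = (\<lambda>S. 0)"

definition grass_one :: "'k::field grass" where
  "grass_one = (\<lambda>S. if S = {} then 1 else 0)"

definition grass_add :: "'k::field grass \<Rightarrow> 'k grass \<Rightarrow> 'k grass" where
  "grass_add a b = (\<lambda>S. a S + b S)"

definition grass_smult :: "'k::field \<Rightarrow> 'k grass \<Rightarrow> 'k grass" where
  "grass_smult c a = (\<lambda>S. c * a S)"

definition grass_mult :: "'k::field grass \<Rightarrow> 'k grass \<Rightarrow> 'k grass" where
  "grass_mult a b = (\<lambda>S. if finite S then
       (\<Sum>T\<in>Pow S. (-1) ^ grass_inv T (S - T) * a T * b (S - T)) else 0)"

text \<open>(a, b, c) represents the upper triangular matrix [[a, b], [0, c]].\<close>
type_synonym 'k tri = "'k grass \<times> 'k grass \<times> 'k grass"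

definition tri_carrier :: "'k::field tri set" where
  "tri_carrier = {(a, b, c). a \<in> grass_even \<and> b \<in> grass_carrier \<and> c \<in> grass_carrier}"

definition tri_zero :: "'k::field tri" where
  "tri_zero = (grass_zero, grass_zero, grass_zero)"

definition tri_one :: "'k::field tri" where
  "tri_one = (grass_one, grass_zero, grass_one)"

fun tri_add :: "'k::field tri \<Rightarrow> 'k tri \<Rightarrow> 'k tri" where
  "tri_add (a, b, c) (a', b', c') = (grass_add a a', grass_add b b', grass_add c c')"

fun tri_smult :: "'k::field \<Rightarrow> 'k tri \<Rightarrow> 'k tri" where
  "tri_smult k (a, b, c) = (grass_smult k a, grass_smult k b, grass_smult k c)"

fun tri_mult :: "'k::field tri \<Rightarrow> 'k tri \<Rightarrow> 'k tri" where
  "tri_mult (a, b, c) (a', b', c') =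
     (grass_mult a a', grass_add (grass_mult a b') (grass_mult b c'), grass_mult c c')"

definition tri_word :: "(nat \<Rightarrow> 'k::field tri) \<Rightarrow> nat list \<Rightarrow> 'k tri" where
  "tri_word \<phi> w = foldr (\<lambda>i acc. tri_mult (\<phi> i) acc) w tri_one"

text \<open>A noncommutative polynomial is a finitely supported coefficient function on words
  (lists of variable indices).\<close>
type_synonym 'k ncpoly = "nat list \<Rightarrow> 'k"

definition ncpoly_all :: "'k::field ncpoly set" where
  "ncpoly_all = {p. finite {w. p w \<noteq> 0}}"

definition ncpoly_carrier :: "nat \<Rightarrow> 'k::field ncpoly set" where
  "ncpoly_carrier n = {p \<in> ncpoly_all. \<forall>w. p w \<noteq> 0 \<longrightarrow> set w \<subseteq> {1..n}}"

definition pvar :: "nat \<Rightarrow> 'k::field ncpoly" where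
  "pvar i = (\<lambda>w. if w = [i] then 1 else 0)"

definition pone :: "'k::field ncpoly" where
  "pone = (\<lambda>w. if w = [] then 1 else 0)"

definition pminus :: "'k::field ncpoly \<Rightarrow> 'k ncpoly \<Rightarrow> 'k ncpoly" where
  "pminus p q = (\<lambda>w. p w - q w)"

definition pmult :: "'k::field ncpoly \<Rightarrow> 'k ncpoly \<Rightarrow> 'k ncpoly" where
  "pmult p q = (\<lambda>w. \<Sum>i\<in>{0..length w}. p (take i w) * q (drop i w))"

definition pcomm :: "'k::field ncpoly \<Rightarrow> 'k ncpoly \<Rightarrow> 'k ncpoly" where
  "pcomm p q = pminus (pmult p q) (pmult q p)"

fun plcomm :: "'k::field ncpoly \<Rightarrow> 'k ncpoly \<Rightarrow> nat \<Rightarrow> 'k ncpoly" where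
  "plcomm y x 0 = y"
| "plcomm y x (Suc k) = pcomm (plcomm y x k) x"

definition f1 :: "nat \<Rightarrow> 'k::field ncpoly" where
  "f1 m = plcomm (pvar 2) (pvar 1) (m - 1)"

definition pword :: "(nat \<Rightarrow> 'k::field ncpoly) \<Rightarrow> nat list \<Rightarrow> 'k ncpoly" where
  "pword g w = foldr (\<lambda>i acc. pmult (g i) acc) w pone"

definition psubst :: "(nat \<Rightarrow> 'k::field ncpoly) \<Rightarrow> 'k ncpoly \<Rightarrow> 'k ncpoly" where
  "psubst g p = (\<lambda>u. \<Sum>w\<in>{w. p w \<noteq> 0}. p w * pword g w u)"

definition tri_eval :: "(nat \<Rightarrow> 'k::field tri) \<Rightarrow> 'k ncpoly \<Rightarrow> 'k tri" where
  "tri_eval \<phi> p =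
     (let W = {w. p w \<noteq> 0}; F = (\<lambda>w. tri_smult (p w) (tri_word \<phi> w)) in
      ((\<lambda>S. \<Sum>w\<in>W. fst (F w) S), (\<lambda>S. \<Sum>w\<in>W. fst (snd (F w)) S),
       (\<lambda>S. \<Sum>w\<in>W. snd (snd (F w)) S)))"

definition TA :: "'k::field ncpoly set" where
  "TA = {p \<in> ncpoly_all. \<forall>\<phi>. (\<forall>i. \<phi> i \<in> tri_carrier) \<longrightarrow> tri_eval \<phi> p = tri_zero}"

text \<open>An element of F_n(A) is the class of a
  polynomial in K<x_1..x_n>; evaluating f at classes [g i] gives the class of the substituted
  polynomial, which is zero iff that polynomial lies in T(A). Hence f is a polynomial identity
  of F_n(A) iff every substitution of polynomials of K<x_1..x_n> into f lands in T(A).\<close>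
definition is_PI_Fn :: "nat \<Rightarrow> 'k::field ncpoly \<Rightarrow> bool" where
  "is_PI_Fn n f \<longleftrightarrow> (\<forall>g. (\<forall>i. g i \<in> ncpoly_carrier n) \<longrightarrow> psubst g f \<in> TA)"

end

theory Submission
  imports Defs
begin

text \<open>Substitute the scalar matrix units x_1 := E_11 and x_2 := E_12, which lie in A.
  Since [E_12, E_11] = -E_12, the commutator f_m evaluates to (-1)^(m-1) E_12, which is nonzero,
  so f_m is not in T(A); as f_m only involves x_1, x_2 and n \<ge> 2, the identity substitution
  of K<x_1, ..., x_n> then shows that f_m is not an identity of F_n(A).
  Rather than proving that evaluation is multiplicative, we only track the E_12-coefficient
  of the evaluation, a linear functional on polynomials, through the commutators.\<close>

definition ncpoly_supp :: "'k::field ncpoly \<Rightarrow> nat list set" where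
  "ncpoly_supp p = {w. p w \<noteq> 0}"

lemma pvar_take_times_drop:
  assumes "j \<le> length u"
  shows "pvar i (take j u) * (q::'k::field ncpoly) (drop j u) =
    (if j = 1 \<and> u \<noteq> [] \<and> hd u = i then q (tl u) else 0)"
proof (cases u)
  case (Cons a v)
  show ?thesis
  proof (cases j)
    case (Suc j')
    then have "take j' v = [] \<longleftrightarrow> j' = 0"
      using assms Cons by auto
    then show ?thesis
      using Cons Suc by (auto simp: pvar_def)
  qed (simp add: Cons pvar_def)
qed (use assms in \<open>simp add: pvar_def\<close>)

lemma take_times_pvar_drop:
  assumes "j \<le> length u"
  shows "(q::'k::field ncpoly) (take j u) * pvar i (drop j u) =
    (if j = length u - 1 \<and> u \<noteq> [] \<and> last u = i then q (butlast u) else 0)"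
proof (cases "u = []")
  case False
  then obtain v a where u: "u = v @ [a]"
    by (metis append_butlast_last_id)
  consider "j < length v" | "j = length v" | "j = length u"
    using assms u by fastforce
  then show ?thesis
    by cases (auto simp: u pvar_def)
qed (use assms in \<open>simp add: pvar_def\<close>)

lemma pmult_pvar_left:
  "pmult (pvar i) q u = (if u \<noteq> [] \<and> hd u = i then q (tl u) else 0)"
proof -
  have "pmult (pvar i) q u =
      (\<Sum>j\<in>{0..length u}. if j = 1 \<and> u \<noteq> [] \<and> hd u = i then q (tl u) else 0)"
    unfolding pmult_def by (rule sum.cong) (simp_all add: pvar_take_times_drop)
  also have "\<dots> = (if u \<noteq> [] \<and> hd u = i then q (tl u) else 0)"
  proof (cases "u \<noteq> [] \<and> hd u = i")
    case True
    then have "(1::nat) \<in> {0..length u}"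
      by (cases u) auto
    then show ?thesis
      using True by simp
  qed auto
  finally show ?thesis .
qed

lemma pmult_pvar_right:
  "pmult q (pvar i) u = (if u \<noteq> [] \<and> last u = i then q (butlast u) else 0)"
proof -
  have "pmult q (pvar i) u =
      (\<Sum>j\<in>{0..length u}. if j = length u - 1 \<and> u \<noteq> [] \<and> last u = i then q (butlast u) else 0)"
    unfolding pmult_def by (rule sum.cong) (simp_all add: take_times_pvar_drop)
  also have "\<dots> = (if u \<noteq> [] \<and> last u = i then q (butlast u) else 0)"
    by simp
  finally show ?thesis .
qed

lemma ncpoly_supp_pmult_pvar_left:
  "ncpoly_supp (pmult (pvar i) q) = Cons i ` ncpoly_supp q"
proof (rule set_eqI)
  fix w
  show "w \<in> ncpoly_supp (pmult (pvar i) q) \<longleftrightarrow> w \<in> Cons i ` ncpoly_supp q"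
    by (cases w) (auto simp: ncpoly_supp_def pmult_pvar_left)
qed

lemma ncpoly_supp_pmult_pvar_right:
  "ncpoly_supp (pmult q (pvar i)) = (\<lambda>u. u @ [i]) ` ncpoly_supp q"
proof (rule set_eqI)
  fix w
  show "w \<in> ncpoly_supp (pmult q (pvar i)) \<longleftrightarrow> w \<in> (\<lambda>u. u @ [i]) ` ncpoly_supp q"
    by (cases w rule: rev_cases) (auto simp: ncpoly_supp_def pmult_pvar_right)
qed

lemma ncpoly_supp_pvar: "ncpoly_supp (pvar i) = {[i]}"
  by (auto simp: ncpoly_supp_def pvar_def)

lemma ncpoly_carrier_iff:
  "p \<in> ncpoly_carrier n \<longleftrightarrow>
    finite (ncpoly_supp p) \<and> (\<forall>w\<in>ncpoly_supp p. set w \<subseteq> {1..n})"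
  by (auto simp: ncpoly_carrier_def ncpoly_all_def ncpoly_supp_def)

lemma pvar_in_ncpoly_carrier:
  assumes "i \<in> {1..n}"
  shows "pvar i \<in> ncpoly_carrier n"
  using assms by (simp add: ncpoly_carrier_iff ncpoly_supp_pvar)

lemma pmult_pvar_left_in_ncpoly_carrier:
  assumes "i \<in> {1..n}" "q \<in> ncpoly_carrier n"
  shows "pmult (pvar i) q \<in> ncpoly_carrier n"
  using assms by (auto simp: ncpoly_carrier_iff ncpoly_supp_pmult_pvar_left)

lemma pmult_pvar_right_in_ncpoly_carrier:
  assumes "i \<in> {1..n}" "q \<in> ncpoly_carrier n"
  shows "pmult q (pvar i) \<in> ncpoly_carrier n"
  using assms by (auto simp: ncpoly_carrier_iff ncpoly_supp_pmult_pvar_right)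

lemma pminus_in_ncpoly_carrier:
  assumes "p \<in> ncpoly_carrier n" "q \<in> ncpoly_carrier n"
  shows "pminus p q \<in> ncpoly_carrier n"
proof -
  have "ncpoly_supp (pminus p q) \<subseteq> ncpoly_supp p \<union> ncpoly_supp q"
    by (auto simp: ncpoly_supp_def pminus_def)
  then show ?thesis
    using assms by (auto simp: ncpoly_carrier_iff intro: finite_subset)
qed

lemma plcomm_pvar_in_ncpoly_carrier:
  assumes "i \<in> {1..n}" "j \<in> {1..n}"
  shows "plcomm (pvar j) (pvar i) k \<in> ncpoly_carrier n"
proof (induction k)
  case 0
  show ?case
    using pvar_in_ncpoly_carrier[OF assms(2)] by simp
next
  case (Suc k)
  then show ?case
    unfolding plcomm.simps pcomm_def
    by (intro pminus_in_ncpoly_carrier pmult_pvar_left_in_ncpoly_carrier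
        pmult_pvar_right_in_ncpoly_carrier assms)
qed

definition id_subst :: "nat \<Rightarrow> nat \<Rightarrow> 'k::field ncpoly" where
  "id_subst n i = (if i \<in> {1..n} then pvar i else (\<lambda>w. 0))"

lemma id_subst_in_ncpoly_carrier: "id_subst n i \<in> ncpoly_carrier n"
proof (cases "i \<in> {1..n}")
  case True
  then show ?thesis
    by (simp add: id_subst_def pvar_in_ncpoly_carrier)
next
  case False
  show ?thesis
    unfolding id_subst_def if_not_P[OF False] by (simp add: ncpoly_carrier_iff ncpoly_supp_def)
qed

lemma pword_id_subst:
  "set w \<subseteq> {1..n} \<Longrightarrow>
    pword (id_subst n :: nat \<Rightarrow> 'k::field ncpoly) w = (\<lambda>u. if u = w then 1 else 0)"
proof (induction w)
  case Nil
  then show ?case by (simp add: pword_def pone_def)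
next
  case (Cons i w)
  then have "i \<in> {1..n}" "set w \<subseteq> {1..n}" by auto
  then have "pword (id_subst n :: nat \<Rightarrow> 'k ncpoly) (i # w) =
      pmult (pvar i) (\<lambda>u. if u = w then 1 else 0)"
    using Cons.IH by (simp add: pword_def id_subst_def)
  also have "\<dots> = (\<lambda>u. if u = i # w then 1 else 0)"
    by (rule ext) (auto simp: pmult_pvar_left neq_Nil_conv)
  finally show ?case .
qed

lemma psubst_id_subst:
  assumes "p \<in> ncpoly_carrier n"
  shows "psubst (id_subst n) p = p"
proof (rule ext)
  fix u
  have "psubst (id_subst n) p u = (\<Sum>w\<in>ncpoly_supp p. if w = u then p w else 0)"
    unfolding psubst_def ncpoly_supp_def[symmetric]
    using assms by (intro sum.cong) (auto simp: ncpoly_carrier_iff pword_id_subst)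
  also have "\<dots> = p u"
    using assms by (simp add: ncpoly_carrier_iff ncpoly_supp_def)
  finally show "psubst (id_subst n) p u = p u" .
qed

definition grass_scalar :: "'k::field \<Rightarrow> 'k grass" where
  "grass_scalar c = (\<lambda>S. if S = {} then c else 0)"

lemma grass_mult_scalar: "grass_mult (grass_scalar c) (grass_scalar d) = grass_scalar (c * d)"
proof (rule ext)
  fix S :: "nat set"
  show "grass_mult (grass_scalar c) (grass_scalar d) S = grass_scalar (c * d) S"
  proof (cases "S = {}")
    case False
    then have "(\<Sum>T\<in>Pow S. (-1) ^ grass_inv T (S - T) * grass_scalar c T * grass_scalar d (S - T)) = 0"
      by (intro sum.neutral) (auto simp: grass_scalar_def)
    then show ?thesis
      using False by (simp add: grass_mult_def grass_scalar_def)
  qed (simp add: grass_mult_def grass_scalar_def grass_inv_def)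
qed

lemma grass_add_scalar: "grass_add (grass_scalar c) (grass_scalar d) = grass_scalar (c + d)"
  by (auto simp: grass_add_def grass_scalar_def)

lemma grass_scalar_in_grass_carrier: "grass_scalar c \<in> grass_carrier"
proof -
  have "{S. grass_scalar c S \<noteq> 0} \<subseteq> {{}}"
    by (auto simp: grass_scalar_def)
  then show ?thesis
    by (auto simp: grass_carrier_def grass_scalar_def intro: finite_subset)
qed

lemma grass_scalar_in_grass_even: "grass_scalar c \<in> grass_even"
  using grass_scalar_in_grass_carrier by (auto simp: grass_even_def grass_scalar_def)

definition unit_subst :: "nat \<Rightarrow> 'k::field tri" where
  "unit_subst i =
    (grass_scalar (if i = 1 then 1 else 0), grass_scalar (if i = 2 then 1 else 0), grass_scalar 0)"

lemma unit_subst_in_tri_carrier: "unit_subst i \<in> tri_carrier"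
  by (simp add: unit_subst_def tri_carrier_def grass_scalar_in_grass_even
      grass_scalar_in_grass_carrier)

fun unit_word_11 :: "nat list \<Rightarrow> 'k::field" where
  "unit_word_11 [] = 1"
| "unit_word_11 (i # w) = (if i = 1 then unit_word_11 w else 0)"

fun unit_word_12 :: "nat list \<Rightarrow> 'k::field" where
  "unit_word_12 [] = 0"
| "unit_word_12 (i # w) = (if i = 1 then unit_word_12 w else if i = 2 \<and> w = [] then 1 else 0)"

lemma tri_word_unit_subst:
  "tri_word unit_subst w =
    (grass_scalar (unit_word_11 w), grass_scalar (unit_word_12 w),
     grass_scalar (if w = [] then 1 else (0::'k::field)))"
proof (induction w)
  case Nil
  then show ?case
    by (simp add: tri_word_def tri_one_def grass_one_def grass_zero_def grass_scalar_def)
next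
  case (Cons i w)
  have "tri_word unit_subst (i # w) =
      tri_mult (unit_subst i) (tri_word (unit_subst :: nat \<Rightarrow> 'k tri) w)"
    by (simp add: tri_word_def)
  also have "\<dots> = (grass_scalar (unit_word_11 (i # w)), grass_scalar (unit_word_12 (i # w)),
      grass_scalar (if i # w = [] then 1 else 0))"
    unfolding Cons.IH by (simp add: unit_subst_def grass_mult_scalar grass_add_scalar)
  finally show ?case .
qed

lemma unit_word_12_snoc:
  assumes "i \<noteq> 2"
  shows "unit_word_12 (u @ [i]) = 0"
  using assms by (induction u) auto

definition corner_coeff :: "'k::field ncpoly \<Rightarrow> 'k" where
  "corner_coeff p = (\<Sum>w\<in>ncpoly_supp p. p w * unit_word_12 w)"

lemma tri_eval_unit_subst_corner:
  "fst (snd (tri_eval unit_subst p)) {} = corner_coeff p"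
  by (simp add: tri_eval_def Let_def corner_coeff_def ncpoly_supp_def tri_word_unit_subst
      grass_smult_def grass_scalar_def)

lemma corner_coeff_superset:
  assumes "finite F" "ncpoly_supp p \<subseteq> F"
  shows "corner_coeff p = (\<Sum>w\<in>F. p w * unit_word_12 w)"
  unfolding corner_coeff_def
  using assms by (intro sum.mono_neutral_left) (auto simp: ncpoly_supp_def)

lemma corner_coeff_pminus:
  assumes "finite (ncpoly_supp p)" "finite (ncpoly_supp q)"
  shows "corner_coeff (pminus p q) = corner_coeff p - corner_coeff q"
proof -
  let ?F = "ncpoly_supp p \<union> ncpoly_supp q"
  have "ncpoly_supp (pminus p q) \<subseteq> ?F"
    by (auto simp: ncpoly_supp_def pminus_def)
  then have "corner_coeff (pminus p q) = (\<Sum>w\<in>?F. (p w - q w) * unit_word_12 w)"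
    using assms by (simp add: corner_coeff_superset pminus_def)
  also have "\<dots> = (\<Sum>w\<in>?F. p w * unit_word_12 w) - (\<Sum>w\<in>?F. q w * unit_word_12 w)"
    by (simp add: left_diff_distrib sum_subtractf)
  also have "\<dots> = corner_coeff p - corner_coeff q"
    using assms corner_coeff_superset[of ?F p] corner_coeff_superset[of ?F q] by simp
  finally show ?thesis .
qed

lemma corner_coeff_pmult_pvar_right:
  assumes "i \<noteq> 2"
  shows "corner_coeff (pmult q (pvar i)) = 0"
  unfolding corner_coeff_def ncpoly_supp_pmult_pvar_right
  using assms by (simp add: sum.reindex inj_on_def unit_word_12_snoc)

lemma corner_coeff_pmult_pvar1_left: "corner_coeff (pmult (pvar 1) q) = corner_coeff q"
  unfolding corner_coeff_def ncpoly_supp_pmult_pvar_left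
  by (simp add: sum.reindex pmult_pvar_left)

lemma corner_coeff_plcomm:
  "corner_coeff (plcomm (pvar 2) (pvar 1) k :: 'k::field ncpoly) = (-1) ^ k"
proof (induction k)
  case 0
  show ?case
    unfolding corner_coeff_def plcomm.simps ncpoly_supp_pvar by (simp add: pvar_def)
next
  case (Suc k)
  let ?p = "plcomm (pvar 2) (pvar 1) k :: 'k ncpoly"
  have "?p \<in> ncpoly_carrier 2"
    by (simp add: plcomm_pvar_in_ncpoly_carrier)
  then have "finite (ncpoly_supp (pmult ?p (pvar 1)))" "finite (ncpoly_supp (pmult (pvar 1) ?p))"
    by (simp_all add: ncpoly_carrier_iff ncpoly_supp_pmult_pvar_left ncpoly_supp_pmult_pvar_right)
  then have "corner_coeff (pcomm ?p (pvar 1)) =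
      corner_coeff (pmult ?p (pvar 1)) - corner_coeff (pmult (pvar 1) ?p)"
    unfolding pcomm_def by (rule corner_coeff_pminus)
  also have "\<dots> = - corner_coeff ?p"
    using corner_coeff_pmult_pvar_right[of 1 ?p] corner_coeff_pmult_pvar1_left[of ?p] by simp
  finally show ?case
    using Suc.IH by simp
qed

theorem lemma3p5:
  fixes n m :: nat
  assumes "n \<ge> 2" and "m \<ge> 2"
  shows "\<not> is_PI_Fn n (f1 m :: 'k::field_char_0 ncpoly)"
proof
  assume "is_PI_Fn n (f1 m :: 'k ncpoly)"
  then have "psubst (id_subst n) (f1 m :: 'k ncpoly) \<in> TA"
    unfolding is_PI_Fn_def using id_subst_in_ncpoly_carrier by blast
  moreover have "(f1 m :: 'k ncpoly) \<in> ncpoly_carrier n"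
    unfolding f1_def using assms(1) by (simp add: plcomm_pvar_in_ncpoly_carrier)
  ultimately have "(f1 m :: 'k ncpoly) \<in> TA"
    by (simp add: psubst_id_subst)
  then have "tri_eval unit_subst (f1 m :: 'k ncpoly) = tri_zero"
    by (simp add: TA_def unit_subst_in_tri_carrier)
  then have "corner_coeff (f1 m :: 'k ncpoly) = 0"
    unfolding tri_eval_unit_subst_corner[symmetric] by (simp add: tri_zero_def grass_zero_def)
  then show False
    unfolding f1_def corner_coeff_plcomm by simp
qed

end
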